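(* Let $(W,\omega^W)$ be a vertex operator algebra and $\omega'\in W_2$, with $Y(\omega',z)=\sum_{n\in\mathbb Z}L'(n)z^{-n-2}$. Then $\omega'$ is a semi-conformal vector of $(W,\omega^W)$ if and only if $L'(0)\omega'=L^W(0)\omega'=2\omega'$; $L'(1)\omega'=L^W(1)\omega'=0$; $L'(2)\omega'=L^W(2)\omega'=\frac{c'}{2}\mathbf 1$ for some $c'\in\mathbb C$; $L'(-1)\omega'=L^W(-1)\omega'$; and $L'(n)\omega'=L^W(n)\omega'=0$ for all $n\ge 3$.
   Context: $(W,\omega^W)$ is a vertex operator algebra ($\mathbb Z$-graded by $L^W(0)$-eigenvalues, finite-dimensional graded pieces, bounded below), $Y(\omega^W,z)=\sum_n L^W(n)z^{-n-2}$. A semi-conformal vector of $(W,\omega^W)$ is a vector $\omega'$ which is the conformal vector of a vertex operator subalgebra $(U,\omega')$ (vertex subalgebra with a possibly different conformal vector) such that $L^W(n)|_U=L'(n)|_U$ for all $n\ge 0$. *)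

theory Defs
  imports Complex_Main
begin

text \<open>
  A vertex operator is encoded by its modes:
  md u n v denotes u_n v, i.e. Y(u,z) = sum over n of u_n z^(-n-1).
  All structure is relativised to a carrier V, so that vertex subalgebras can be expressed
  with the same vertex operator map restricted to a subspace.
\<close>

text \<open>Sum of a finitely supported family indexed by nat (all sums occurring below are
  finitely supported because of the truncation axiom).\<close>
definition fsum :: "(nat \<Rightarrow> 'v::ab_group_add) \<Rightarrow> 'v" where
  "fsum f = (\<Sum>i\<in>{i. f i \<noteq> 0}. f i)"

definition is_vertex_algebra ::
  "(complex \<Rightarrow> 'v::ab_group_add \<Rightarrow> 'v) \<Rightarrow> 'v set \<Rightarrow> ('v \<Rightarrow> int \<Rightarrow> 'v \<Rightarrow> 'v) \<Rightarrow> 'v \<Rightarrow> bool"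
where
  "is_vertex_algebra sc V md vac \<longleftrightarrow>
     vector_space sc \<and> module.subspace sc V \<and> vac \<in> V
     \<comment> \<open>closure and bilinearity of the modes\<close>
     \<and> (\<forall>u\<in>V. \<forall>v\<in>V. \<forall>n. md u n v \<in> V)
     \<and> (\<forall>u\<in>V. \<forall>v\<in>V. \<forall>w\<in>V. \<forall>n. md u n (v + w) = md u n v + md u n w
                          \<and> md (v + w) n u = md v n u + md w n u)
     \<and> (\<forall>u\<in>V. \<forall>v\<in>V. \<forall>a n. md u n (sc a v) = sc a (md u n v)
                          \<and> md (sc a u) n v = sc a (md u n v))
     \<comment> \<open>truncation\<close>
     \<and> (\<forall>u\<in>V. \<forall>v\<in>V. \<exists>N. \<forall>n\<ge>N. md u n v = 0)
     \<comment> \<open>vacuum and creation properties\<close>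
     \<and> (\<forall>v\<in>V. \<forall>n. md vac n v = (if n = -1 then v else 0))
     \<and> (\<forall>u\<in>V. md u (-1) vac = u \<and> (\<forall>n\<ge>0. md u n vac = 0))
     \<comment> \<open>Borcherds (Jacobi) identity\<close>
     \<and> (\<forall>u\<in>V. \<forall>v\<in>V. \<forall>w\<in>V. \<forall>p q r :: int.
          fsum (\<lambda>i. sc ((of_int p :: complex) gchoose i) (md (md u (r + int i) v) (p + q - int i) w))
        = fsum (\<lambda>i. sc ((-1) ^ i * ((of_int r :: complex) gchoose i))
                    (md u (p + r - int i) (md v (q + int i) w)
                     - sc (if even r then 1 else -1) (md v (q + r - int i) (md u (p + int i) w)))))"

text \<open>Virasoro operators L(n) = omega_(n+1), i.e. Y(omega,z) = sum L(n) z^(-n-2).\<close>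
definition Lop :: "('v \<Rightarrow> int \<Rightarrow> 'v \<Rightarrow> 'v) \<Rightarrow> 'v \<Rightarrow> int \<Rightarrow> 'v \<Rightarrow> 'v" where
  "Lop md \<omega> n = md \<omega> (n + 1)"

definition wt_space ::
  "(complex \<Rightarrow> 'v \<Rightarrow> 'v) \<Rightarrow> 'v set \<Rightarrow> ('v \<Rightarrow> int \<Rightarrow> 'v \<Rightarrow> 'v) \<Rightarrow> 'v \<Rightarrow> int \<Rightarrow> 'v set" where
  "wt_space sc V md \<omega> n = {v \<in> V. Lop md \<omega> 0 v = sc (of_int n) v}"

definition is_VOA ::
  "(complex \<Rightarrow> 'v::ab_group_add \<Rightarrow> 'v) \<Rightarrow> 'v set \<Rightarrow> ('v \<Rightarrow> int \<Rightarrow> 'v \<Rightarrow> 'v) \<Rightarrow> 'v \<Rightarrow> 'v \<Rightarrow> bool"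
where
  "is_VOA sc V md vac \<omega> \<longleftrightarrow>
     is_vertex_algebra sc V md vac \<and> \<omega> \<in> V
     \<comment> \<open>Virasoro relations with some central charge c\<close>
     \<and> (\<exists>c::complex. \<forall>m n :: int. \<forall>v\<in>V.
          Lop md \<omega> m (Lop md \<omega> n v) - Lop md \<omega> n (Lop md \<omega> m v)
          = sc (of_int (m - n)) (Lop md \<omega> (m + n) v)
            + (if m + n = 0 then sc (of_int (m ^ 3 - m) / 12 * c) v else 0))
     \<comment> \<open>L(-1)-derivative property: Y(L(-1)u,z) = d/dz Y(u,z)\<close>
     \<and> (\<forall>u\<in>V. \<forall>v\<in>V. \<forall>n. md (Lop md \<omega> (-1) u) n v = sc (- of_int n) (md u (n - 1) v))
     \<comment> \<open>Z-grading by L(0)-eigenvalues: V is the direct sum of the weight spaces\<close>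
     \<and> (\<forall>v\<in>V. \<exists>S f. finite S \<and> (\<forall>n\<in>S. f n \<in> wt_space sc V md \<omega> n) \<and> v = sum f S)
     \<comment> \<open>finite-dimensional graded pieces\<close>
     \<and> (\<forall>n. \<exists>B. finite B \<and> B \<subseteq> wt_space sc V md \<omega> n
              \<and> wt_space sc V md \<omega> n \<subseteq> module.span sc B)
     \<comment> \<open>grading bounded below\<close>
     \<and> (\<exists>N. \<forall>n<N. wt_space sc V md \<omega> n = {0})"

definition semi_conformal ::
  "(complex \<Rightarrow> 'v::ab_group_add \<Rightarrow> 'v) \<Rightarrow> ('v \<Rightarrow> int \<Rightarrow> 'v \<Rightarrow> 'v) \<Rightarrow> 'v \<Rightarrow> 'v \<Rightarrow> 'v \<Rightarrow> bool"
where
  "semi_conformal sc md vac \<omega>W \<omega>' \<longleftrightarrow>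
     (\<exists>U. is_VOA sc U md vac \<omega>'
          \<and> (\<forall>n\<ge>0. \<forall>u\<in>U. Lop md \<omega>W n u = Lop md \<omega>' n u))"

end

theory Submission
  imports Defs
begin

text \<open>
  If \<open>\<omega>'\<close> is the conformal vector of a vertex operator subalgebra \<open>U\<close> with central
  charge \<open>c'\<close>, the Virasoro relations applied to the vacuum give
  \<open>L'(n)\<omega>' = L'(n)L'(-2)\<one> = (n+2)L'(n-2)\<one> + \<delta>\<^sub>n\<^sub>,\<^sub>2 (c'/2)\<one>\<close>, which are the listed
  values for \<open>n \<ge> 0\<close>; semi-conformality transfers them to \<open>L\<^sup>W(n)\<omega>'\<close>, and
  \<open>L'(-1)\<omega>' = \<omega>'\<^sub>-\<^sub>2\<one> = L\<^sup>W(-1)\<omega>'\<close> by the derivative and creation properties.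

  Conversely, let \<open>U\<close> be the vertex subalgebra generated by \<open>\<omega>'\<close>. By the commutator formula,
  \<open>[\<omega>\<^sub>p, \<omega>'\<^sub>k]\<close> with \<open>p \<ge> 0\<close> only involves the products \<open>\<omega>\<^sub>i\<omega>'\<close> with \<open>i \<ge> 0\<close>, and these
  coincide for \<open>\<omega> = \<omega>\<^sup>W\<close> and \<open>\<omega> = \<omega>'\<close>; hence \<open>L\<^sup>W(n) = L'(n)\<close> on \<open>U\<close> for \<open>n \<ge> -1\<close>.
  The same formula with the prescribed products \<open>\<omega>'\<^sub>i\<omega>'\<close> gives the Virasoro relations with
  central charge \<open>c'\<close>, the derivative property is inherited from \<open>L\<^sup>W(-1)\<close>, and since
  \<open>\<omega>'\<^sub>k\<close> shifts \<open>L\<^sup>W(0)\<close>-weights by \<open>1 - k\<close>, \<open>U\<close> is graded by \<open>L'(0) = L\<^sup>W(0)\<close> with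
  pieces inside those of \<open>W\<close>.
\<close>

lemma gbinomial_1_left_eq_0: "2 \<le> k \<Longrightarrow> (1::'a::field_char_0) gchoose k = 0"
  using binomial_gbinomial[of 1 k, where 'a='a] by (simp add: binomial_eq_0)

lemma gbinomial_3: "(a::'a::field_char_0) gchoose 3 = a * (a - 1) * (a - 2) / 6"
  by (simp add: gbinomial_Suc numeral_eq_Suc atMost_Suc)

lemma fsum_eq_sum_lessThan:
  assumes "\<And>i. N \<le> i \<Longrightarrow> f i = 0"
  shows "fsum f = (\<Sum>i<N. f i)"
  unfolding fsum_def
proof (rule sum.mono_neutral_left)
  show "{i. f i \<noteq> 0} \<subseteq> {..<N}" using assms by (force simp: not_less[symmetric])
qed auto

lemma fsum_eq_first: "(\<And>i. 0 < i \<Longrightarrow> f i = 0) \<Longrightarrow> fsum f = f 0"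
  using fsum_eq_sum_lessThan[of 1 f] by simp

definition finite_sum_of :: "('i \<Rightarrow> 'a::comm_monoid_add set) \<Rightarrow> 'a \<Rightarrow> bool" where
  "finite_sum_of A v \<longleftrightarrow> (\<exists>S f. finite S \<and> (\<forall>n\<in>S. f n \<in> A n) \<and> v = sum f S)"

lemma finite_sum_of_component: "x \<in> A n \<Longrightarrow> finite_sum_of A x"
  unfolding finite_sum_of_def by (intro exI[of _ "{n}"] exI[of _ "\<lambda>_. x"]) simp

lemma finite_sum_of_add:
  assumes zero: "\<And>n. 0 \<in> A n" and add: "\<And>n x y. x \<in> A n \<Longrightarrow> y \<in> A n \<Longrightarrow> x + y \<in> A n"
    and "finite_sum_of A u" and "finite_sum_of A v"
  shows "finite_sum_of A (u + v)"
proof -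
  obtain S f where S: "finite S" "\<forall>n\<in>S. f n \<in> A n" "u = sum f S"
    using \<open>finite_sum_of A u\<close> unfolding finite_sum_of_def by blast
  obtain T g where T: "finite T" "\<forall>n\<in>T. g n \<in> A n" "v = sum g T"
    using \<open>finite_sum_of A v\<close> unfolding finite_sum_of_def by blast
  define f' where "f' n = (if n \<in> S then f n else 0)" for n
  define g' where "g' n = (if n \<in> T then g n else 0)" for n
  have "u = sum f' (S \<union> T)" and "v = sum g' (S \<union> T)"
    by (simp_all add: S T f'_def g'_def sum.If_cases Int_absorb1 Int_absorb2)
  moreover have "\<forall>n\<in>S \<union> T. f' n + g' n \<in> A n"
    using S T zero by (auto simp: f'_def g'_def intro: add)
  ultimately show ?thesis
    unfolding finite_sum_of_def using S T
    by (intro exI[of _ "S \<union> T"] exI[of _ "\<lambda>n. f' n + g' n"]) (simp add: sum.distrib)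
qed

lemma finite_sum_of_image:
  assumes "finite_sum_of A v" and "additive h" and "inj \<sigma>"
    and "\<And>n x. x \<in> A n \<Longrightarrow> h x \<in> B (\<sigma> n)"
  shows "finite_sum_of B (h v)"
proof -
  obtain S f where S: "finite S" "\<forall>n\<in>S. f n \<in> A n" "v = sum f S"
    using assms(1) unfolding finite_sum_of_def by blast
  have "h v = (\<Sum>n\<in>S. h (f (inv \<sigma> (\<sigma> n))))"
    using additive.sum[OF assms(2)] S(3) assms(3) by simp
  also have "\<dots> = (\<Sum>n\<in>\<sigma> ` S. h (f (inv \<sigma> n)))"
    using assms(3) by (simp add: sum.reindex inj_on_subset)
  finally show ?thesis
    unfolding finite_sum_of_def using S assms(3,4)
    by (intro exI[of _ "\<sigma> ` S"] exI[of _ "\<lambda>n. h (f (inv \<sigma> n))"]) auto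
qed

definition virasoro_relations ::
  "(complex \<Rightarrow> 'v::ab_group_add \<Rightarrow> 'v) \<Rightarrow> 'v set \<Rightarrow> ('v \<Rightarrow> int \<Rightarrow> 'v \<Rightarrow> 'v) \<Rightarrow> 'v \<Rightarrow> complex \<Rightarrow> bool"
where
  "virasoro_relations sc V md \<omega> c \<longleftrightarrow> (\<forall>m n. \<forall>v\<in>V.
     Lop md \<omega> m (Lop md \<omega> n v) - Lop md \<omega> n (Lop md \<omega> m v)
     = sc (of_int (m - n)) (Lop md \<omega> (m + n) v)
       + (if m + n = 0 then sc (of_int (m ^ 3 - m) / 12 * c) v else 0))"

definition conformal_modes ::
  "(complex \<Rightarrow> 'v::ab_group_add \<Rightarrow> 'v) \<Rightarrow> ('v \<Rightarrow> int \<Rightarrow> 'v \<Rightarrow> 'v) \<Rightarrow> 'v \<Rightarrow> 'v \<Rightarrow> complex \<Rightarrow> bool"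
where
  "conformal_modes sc md vac \<omega> c \<longleftrightarrow> (\<forall>n\<ge>0.
     Lop md \<omega> n \<omega> = (if n = 0 then sc 2 \<omega> else if n = 2 then sc (c / 2) vac else 0))"

lemma agreeing_conformal_modes_iff:
  "(\<exists>c. conformal_modes sc md vac \<omega>' c \<and> (\<forall>n\<ge>-1. Lop md \<omega>' n \<omega>' = Lop md \<omega>W n \<omega>'))
   \<longleftrightarrow> (Lop md \<omega>' 0 \<omega>' = Lop md \<omega>W 0 \<omega>' \<and> Lop md \<omega>W 0 \<omega>' = sc 2 \<omega>'
      \<and> Lop md \<omega>' 1 \<omega>' = Lop md \<omega>W 1 \<omega>' \<and> Lop md \<omega>W 1 \<omega>' = 0
      \<and> (\<exists>c'::complex. Lop md \<omega>' 2 \<omega>' = Lop md \<omega>W 2 \<omega>' \<and> Lop md \<omega>W 2 \<omega>' = sc (c' / 2) vac)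
      \<and> Lop md \<omega>' (-1) \<omega>' = Lop md \<omega>W (-1) \<omega>'
      \<and> (\<forall>n\<ge>3. Lop md \<omega>' n \<omega>' = Lop md \<omega>W n \<omega>' \<and> Lop md \<omega>W n \<omega>' = 0))"
  (is "?modes \<longleftrightarrow> ?conditions")
proof
  assume ?modes
  then obtain c where modes: "\<And>n. n \<ge> 0 \<Longrightarrow>
      Lop md \<omega>' n \<omega>' = (if n = 0 then sc 2 \<omega>' else if n = 2 then sc (c / 2) vac else 0)"
    and agree: "\<And>n. n \<ge> -1 \<Longrightarrow> Lop md \<omega>' n \<omega>' = Lop md \<omega>W n \<omega>'"
    unfolding conformal_modes_def by blast
  show ?conditions
    using modes[of 0] modes[of 1] modes[of 2] modes agree[of 0] agree[of 1] agree[of 2] agree[of "-1"] agree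
    by auto
next
  assume ?conditions
  then obtain c where "Lop md \<omega>W 2 \<omega>' = sc (c / 2) vac" by blast
  have "conformal_modes sc md vac \<omega>' c \<and> (\<forall>n\<ge>-1. Lop md \<omega>' n \<omega>' = Lop md \<omega>W n \<omega>')"
    unfolding conformal_modes_def
  proof (intro conjI allI impI)
    fix n :: int
    show "Lop md \<omega>' n \<omega>' = (if n = 0 then sc 2 \<omega>' else if n = 2 then sc (c / 2) vac else 0)"
      if "n \<ge> 0"
      using that \<open>?conditions\<close> \<open>Lop md \<omega>W 2 \<omega>' = sc (c / 2) vac\<close>
      by (cases "n = 0 \<or> n = 1 \<or> n = 2") auto
    show "Lop md \<omega>' n \<omega>' = Lop md \<omega>W n \<omega>'" if "n \<ge> -1"
      using that \<open>?conditions\<close> by (cases "n = -1 \<or> n = 0 \<or> n = 1 \<or> n = 2") auto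
  qed
  then show ?modes ..
qed

lemma is_VOA_iff:
  "is_VOA sc V md vac \<omega> \<longleftrightarrow>
     is_vertex_algebra sc V md vac \<and> \<omega> \<in> V
     \<and> (\<exists>c. virasoro_relations sc V md \<omega> c)
     \<and> (\<forall>u\<in>V. \<forall>v\<in>V. \<forall>n. md (Lop md \<omega> (-1) u) n v = sc (- of_int n) (md u (n - 1) v))
     \<and> (\<forall>v\<in>V. \<exists>S f. finite S \<and> (\<forall>n\<in>S. f n \<in> wt_space sc V md \<omega> n) \<and> v = sum f S)
     \<and> (\<forall>n. \<exists>B. finite B \<and> B \<subseteq> wt_space sc V md \<omega> n
              \<and> wt_space sc V md \<omega> n \<subseteq> module.span sc B)
     \<and> (\<exists>N. \<forall>n<N. wt_space sc V md \<omega> n = {0})"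
  unfolding is_VOA_def virasoro_relations_def ..

lemma Lop_minus_one_eq_md_vacuum:
  assumes "is_VOA sc V md vac \<omega>" and "u \<in> V"
  shows "Lop md \<omega> (-1) u = md u (-2) vac"
proof -
  have VA: "is_vertex_algebra sc V md vac" and "\<omega> \<in> V"
    using assms(1) by (simp_all add: is_VOA_iff)
  then interpret vector_space sc by (simp add: is_vertex_algebra_def)
  have "vac \<in> V" and "Lop md \<omega> (-1) u \<in> V"
    using VA \<open>\<omega> \<in> V\<close> assms(2) by (simp_all add: is_vertex_algebra_def Lop_def)
  then have "Lop md \<omega> (-1) u = md (Lop md \<omega> (-1) u) (-1) vac"
    using VA by (simp add: is_vertex_algebra_def)
  also have "\<dots> = md u (-2) vac"
    using assms \<open>vac \<in> V\<close> by (simp add: is_VOA_iff)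
  finally show ?thesis .
qed

lemma virasoro_conformal_modes:
  assumes VA: "is_vertex_algebra sc V md vac" and "\<omega> \<in> V"
    and vir: "virasoro_relations sc V md \<omega> c"
  shows "conformal_modes sc md vac \<omega> c"
  unfolding conformal_modes_def
proof (intro allI impI)
  fix n :: int assume "n \<ge> 0"
  interpret vector_space sc using VA by (simp add: is_vertex_algebra_def)
  have "vac \<in> V" using VA by (simp add: is_vertex_algebra_def)
  have create: "Lop md \<omega> (-2) vac = \<omega>" and annihilate: "\<And>k. k \<ge> 0 \<Longrightarrow> Lop md \<omega> (k - 1) vac = 0"
    using VA \<open>\<omega> \<in> V\<close> by (simp_all add: is_vertex_algebra_def Lop_def)
  have "Lop md \<omega> (-2) (sc 0 vac) = sc 0 (Lop md \<omega> (-2) vac)"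
    using VA \<open>\<omega> \<in> V\<close> \<open>vac \<in> V\<close> unfolding is_vertex_algebra_def Lop_def by blast
  then have "Lop md \<omega> (-2) 0 = 0" by simp
  have "Lop md \<omega> n (Lop md \<omega> (-2) vac) - Lop md \<omega> (-2) (Lop md \<omega> n vac)
      = sc (of_int (n - -2)) (Lop md \<omega> (n + -2) vac)
        + (if n + -2 = 0 then sc (of_int (n ^ 3 - n) / 12 * c) vac else 0)"
    using vir \<open>vac \<in> V\<close> unfolding virasoro_relations_def by blast
  also have "(if n + -2 = 0 then sc (of_int (n ^ 3 - n) / 12 * c) vac else 0)
      = (if n = 2 then sc (c / 2) vac else 0)"
    by auto
  finally have "Lop md \<omega> n \<omega> = sc (of_int (n + 2)) (Lop md \<omega> (n - 2) vac)
      + (if n = 2 then sc (c / 2) vac else 0)"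
    using create annihilate[of "n + 1"] \<open>n \<ge> 0\<close> \<open>Lop md \<omega> (-2) 0 = 0\<close> by simp
  moreover have "Lop md \<omega> (n - 2) vac = (if n = 0 then \<omega> else 0)"
    using create annihilate[of "n - 1"] \<open>n \<ge> 0\<close> by auto
  ultimately show "Lop md \<omega> n \<omega> = (if n = 0 then sc 2 \<omega> else if n = 2 then sc (c / 2) vac else 0)"
    by auto
qed

lemma semi_conformal_conformal_modes:
  assumes W: "is_VOA sc UNIV md vac \<omega>W" and "semi_conformal sc md vac \<omega>W \<omega>'"
  shows "\<exists>c. conformal_modes sc md vac \<omega>' c \<and> (\<forall>n\<ge>-1. Lop md \<omega>' n \<omega>' = Lop md \<omega>W n \<omega>')"
proof -
  obtain U where U: "is_VOA sc U md vac \<omega>'"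
    and agree: "\<forall>n\<ge>0. \<forall>u\<in>U. Lop md \<omega>W n u = Lop md \<omega>' n u"
    using assms(2) unfolding semi_conformal_def by blast
  have "\<omega>' \<in> U" using U by (simp add: is_VOA_iff)
  obtain c where "virasoro_relations sc U md \<omega>' c" using U by (auto simp: is_VOA_iff)
  then have "conformal_modes sc md vac \<omega>' c"
    using U by (intro virasoro_conformal_modes) (simp_all add: is_VOA_iff)
  moreover have "Lop md \<omega>' n \<omega>' = Lop md \<omega>W n \<omega>'" if "n \<ge> -1" for n
  proof (cases "n = -1")
    case True
    then show ?thesis
      using Lop_minus_one_eq_md_vacuum[OF U \<open>\<omega>' \<in> U\<close>] Lop_minus_one_eq_md_vacuum[OF W] by simp
  next
    case False
    then show ?thesis using agree \<open>\<omega>' \<in> U\<close> that by simp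
  qed
  ultimately show ?thesis by blast
qed

locale univ_vertex_algebra =
  fixes sc :: "complex \<Rightarrow> 'v::ab_group_add \<Rightarrow> 'v"
    and md :: "'v \<Rightarrow> int \<Rightarrow> 'v \<Rightarrow> 'v"
    and vac :: 'v
  assumes vertex_algebra: "is_vertex_algebra sc UNIV md vac"
begin

sublocale vector_space sc
  using vertex_algebra by (simp add: is_vertex_algebra_def)

lemma md_add_right: "md u n (v + w) = md u n v + md u n w"
  and md_add_left: "md (v + w) n u = md v n u + md w n u"
  and md_scale_right: "md u n (sc a v) = sc a (md u n v)"
  and md_scale_left: "md (sc a u) n v = sc a (md u n v)"
  and md_vacuum_left: "md vac n v = (if n = -1 then v else 0)"
  and md_vacuum_creation: "md u (-1) vac = u"
  and md_vacuum_nonneg: "n \<ge> 0 \<Longrightarrow> md u n vac = 0"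
  and md_truncation: "\<exists>N. \<forall>n\<ge>N. md u n v = 0"
  using vertex_algebra by (simp_all add: is_vertex_algebra_def)

lemma borcherds:
  "fsum (\<lambda>i. sc ((of_int p :: complex) gchoose i) (md (md u (r + int i) v) (p + q - int i) w))
   = fsum (\<lambda>i. sc ((-1) ^ i * ((of_int r :: complex) gchoose i))
       (md u (p + r - int i) (md v (q + int i) w)
        - sc (if even r then 1 else -1) (md v (q + r - int i) (md u (p + int i) w))))"
  using vertex_algebra unfolding is_vertex_algebra_def by blast

lemma md_zero_right [simp]: "md u n 0 = 0"
  using md_scale_right[where a=0 and v=0] by simp

lemma md_zero_left [simp]: "md 0 n u = 0"
  using md_scale_left[where a=0 and u=0] by simp

lemma commutator_formula:
  "md u p (md v q w) - md v q (md u p w)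
   = fsum (\<lambda>i. sc ((of_int p :: complex) gchoose i) (md (md u (int i) v) (p + q - int i) w))"
proof -
  have "fsum (\<lambda>i. sc ((-1) ^ i * ((of_int 0 :: complex) gchoose i))
          (md u (p + 0 - int i) (md v (q + int i) w)
           - sc (if even (0::int) then 1 else -1) (md v (q + 0 - int i) (md u (p + int i) w))))
       = md u p (md v q w) - md v q (md u p w)"
    by (subst fsum_eq_first) (auto simp: gbinomial_0_left)
  then show ?thesis using borcherds[where r=0] by simp
qed

lemma associator_formula:
  "md (md u r v) q w
   = fsum (\<lambda>i. sc ((-1) ^ i * ((of_int r :: complex) gchoose i))
       (md u (r - int i) (md v (q + int i) w)
        - sc (if even r then 1 else -1) (md v (q + r - int i) (md u (int i) w))))"
proof -
  have "fsum (\<lambda>i. sc ((of_int 0 :: complex) gchoose i) (md (md u (r + int i) v) (0 + q - int i) w))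
     = md (md u r v) q w"
    by (subst fsum_eq_first) (auto simp: gbinomial_0_left)
  then show ?thesis using borcherds[where p=0] by simp
qed

end

locale univ_VOA =
  fixes sc :: "complex \<Rightarrow> 'v::ab_group_add \<Rightarrow> 'v"
    and md :: "'v \<Rightarrow> int \<Rightarrow> 'v \<Rightarrow> 'v"
    and vac \<omega>W :: 'v
  assumes VOA: "is_VOA sc UNIV md vac \<omega>W"
begin

sublocale univ_vertex_algebra sc md vac
  using VOA by unfold_locales (simp add: is_VOA_iff)

lemma md_derivative: "md (md \<omega>W 0 u) n v = sc (- of_int n) (md u (n - 1) v)"
  using VOA by (simp add: is_VOA_iff Lop_def)

lemma wt_space_finite_basis:
  "\<exists>B. finite B \<and> B \<subseteq> wt_space sc UNIV md \<omega>W n \<and> wt_space sc UNIV md \<omega>W n \<subseteq> span B"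
  using VOA by (simp add: is_VOA_iff)

lemma wt_space_bounded_below: "\<exists>N. \<forall>n<N. wt_space sc UNIV md \<omega>W n = {0}"
  using VOA by (simp add: is_VOA_iff)

end

locale conformal_candidate = univ_VOA sc md vac \<omega>W
  for sc :: "complex \<Rightarrow> 'v::ab_group_add \<Rightarrow> 'v" and md vac \<omega>W +
  fixes \<omega>' :: 'v and c :: complex
  assumes agree_on_omega': "n \<ge> -1 \<Longrightarrow> Lop md \<omega>' n \<omega>' = Lop md \<omega>W n \<omega>'"
    and modes: "conformal_modes sc md vac \<omega>' c"
begin

lemma md_omega'_omega'_agree: "md \<omega>' (int i) \<omega>' = md \<omega>W (int i) \<omega>'"
  using agree_on_omega'[of "int i - 1"] by (simp add: Lop_def)

lemma md_omega'_omega'_nonneg: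
  "n \<ge> 0 \<Longrightarrow> md \<omega>' (n + 1) \<omega>' = (if n = 0 then sc 2 \<omega>' else if n = 2 then sc (c / 2) vac else 0)"
  using modes by (simp add: conformal_modes_def Lop_def)

lemma md_omega'_omega'_1: "md \<omega>' 1 \<omega>' = sc 2 \<omega>'"
  and md_omega'_omega'_2: "md \<omega>' 2 \<omega>' = 0"
  and md_omega'_omega'_3: "md \<omega>' 3 \<omega>' = sc (c / 2) vac"
  using md_omega'_omega'_nonneg[of 0] md_omega'_omega'_nonneg[of 1] md_omega'_omega'_nonneg[of 2]
  by simp_all

lemma md_omega'_omega'_high: "4 \<le> i \<Longrightarrow> md \<omega>' (int i) \<omega>' = 0"
  using md_omega'_omega'_nonneg[of "int i - 1"] by simp

lemma md_omega'_omega'_0: "md \<omega>' 0 \<omega>' = md \<omega>W 0 \<omega>'"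
  using md_omega'_omega'_agree[of 0] by simp

lemma weight_omega': "md \<omega>W 1 \<omega>' = sc 2 \<omega>'"
  using md_omega'_omega'_agree[of 1] md_omega'_omega'_1 by simp

inductive_set Vir :: "'v set" where
  vacuum: "vac \<in> Vir"
| add: "u \<in> Vir \<Longrightarrow> v \<in> Vir \<Longrightarrow> u + v \<in> Vir"
| scale: "u \<in> Vir \<Longrightarrow> sc a u \<in> Vir"
| mode: "u \<in> Vir \<Longrightarrow> md \<omega>' k u \<in> Vir"

lemma Vir_zero: "0 \<in> Vir"
  using Vir.scale[OF Vir.vacuum, of 0] by simp

lemma Vir_diff: "u \<in> Vir \<Longrightarrow> v \<in> Vir \<Longrightarrow> u - v \<in> Vir"
  using Vir.add[of u "sc (-1) v"] Vir.scale[of v "-1"] by simp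

lemma Vir_sum: "(\<And>x. x \<in> S \<Longrightarrow> f x \<in> Vir) \<Longrightarrow> sum f S \<in> Vir"
  by (induct S rule: infinite_finite_induct) (auto intro: Vir_zero Vir.add)

lemma Vir_fsum: "(\<And>i. f i \<in> Vir) \<Longrightarrow> fsum f \<in> Vir"
  unfolding fsum_def by (rule Vir_sum) auto

lemma subspace_Vir: "subspace Vir"
  unfolding subspace_def using Vir_zero Vir.add Vir.scale by blast

lemma omega'_in_Vir: "\<omega>' \<in> Vir"
  using Vir.mode[OF Vir.vacuum, of "-1"] md_vacuum_creation by simp

lemma md_in_Vir: "u \<in> Vir \<Longrightarrow> v \<in> Vir \<Longrightarrow> md u n v \<in> Vir"
proof (induction u arbitrary: v n rule: Vir.induct)
  case vacuum
  then show ?case by (simp add: md_vacuum_left Vir_zero)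
next
  case (add u1 u2)
  then show ?case by (simp add: md_add_left Vir.add)
next
  case (scale u a)
  then show ?case by (simp add: md_scale_left Vir.scale)
next
  case (mode u k)
  show ?case unfolding associator_formula
    by (intro Vir_fsum Vir.scale Vir_diff Vir.mode mode.IH mode.prems)
qed

lemma md_omegaW_eq_md_omega'_on_Vir: "u \<in> Vir \<Longrightarrow> md \<omega>W (int p) u = md \<omega>' (int p) u"
proof (induction u rule: Vir.induct)
  case vacuum
  then show ?case by (simp add: md_vacuum_nonneg)
next
  case (add u1 u2)
  then show ?case by (simp add: md_add_right)
next
  case (scale u a)
  then show ?case by (simp add: md_scale_right)
next
  case (mode w k)
  have "md \<omega> (int p) (md \<omega>' k w) = md \<omega>' k (md \<omega> (int p) w)
     + fsum (\<lambda>i. sc ((of_int (int p) :: complex) gchoose i) (md (md \<omega> (int i) \<omega>') (int p + k - int i) w))"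
    (is "?commute \<omega>") for \<omega>
    using commutator_formula[of \<omega> "int p" \<omega>' k w] by (metis add.commute diff_eq_eq)
  then show ?case
    using \<open>?commute \<omega>W\<close> \<open>?commute \<omega>'\<close> mode.IH md_omega'_omega'_agree by simp
qed

lemma virasoro_relations_omega': "virasoro_relations sc V md \<omega>' c"
  unfolding virasoro_relations_def Lop_def
proof (intro allI ballI)
  fix m n :: int and v
  define X where "X = md \<omega>' (m + n + 1) v"
  define f where "f i = sc ((of_int (m + 1) :: complex) gchoose i)
    (md (md \<omega>' (int i) \<omega>') (m + 1 + (n + 1) - int i) v)" for i
  have "md \<omega>' (m + 1) (md \<omega>' (n + 1) v) - md \<omega>' (n + 1) (md \<omega>' (m + 1) v) = fsum f"
    unfolding f_def by (rule commutator_formula)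
  also have "\<dots> = f 0 + f 1 + f 2 + f 3"
    by (subst fsum_eq_sum_lessThan[of 4]) (simp_all add: f_def md_omega'_omega'_high numeral_eq_Suc)
  also have "f 0 = sc (- of_int (m + n + 2)) X"
    by (simp add: f_def md_omega'_omega'_0 md_derivative X_def algebra_simps)
  also have "f 1 = sc (of_int (m + 1) * 2) X"
    by (simp add: f_def md_omega'_omega'_1 md_scale_left X_def algebra_simps)
  also have "f 2 = 0"
    by (simp add: f_def md_omega'_omega'_2)
  also have "f 3 = (if m + n = 0 then sc (of_int (m ^ 3 - m) / 12 * c) v else 0)"
  proof -
    have "f 3 = sc ((of_int (m + 1) gchoose 3) * (c / 2)) (if m + n = 0 then v else 0)"
      by (simp add: f_def md_omega'_omega'_3 md_scale_left md_vacuum_left algebra_simps)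
    also have "(of_int (m + 1) gchoose 3) * (c / 2) = of_int (m ^ 3 - m) / 12 * c"
      unfolding gbinomial_3 by (simp add: field_simps power3_eq_cube)
    finally show ?thesis by simp
  qed
  also have "sc (- of_int (m + n + 2)) X + sc (of_int (m + 1) * 2) X = sc (of_int (m - n)) X"
    unfolding scale_left_distrib[symmetric] by (rule arg_cong[where f = "\<lambda>a. sc a X"]) simp
  finally show "md \<omega>' (m + 1) (md \<omega>' (n + 1) v) - md \<omega>' (n + 1) (md \<omega>' (m + 1) v)
    = sc (of_int (m - n)) (md \<omega>' (m + n + 1) v)
      + (if m + n = 0 then sc (of_int (m ^ 3 - m) / 12 * c) v else 0)"
    by (simp add: X_def)
qed

lemma md_derivative_Vir: "u \<in> Vir \<Longrightarrow> md (md \<omega>' 0 u) n v = sc (- of_int n) (md u (n - 1) v)"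
  using md_omegaW_eq_md_omega'_on_Vir[of u 0] md_derivative[of u n v] by simp

lemma md_omega'_shifts_weight:
  assumes "md \<omega>W 1 w = sc (of_int m) w"
  shows "md \<omega>W 1 (md \<omega>' k w) = sc (of_int (m + 1 - k)) (md \<omega>' k w)"
proof -
  define X where "X = md \<omega>' k w"
  define f where "f i = sc ((of_int 1 :: complex) gchoose i) (md (md \<omega>W (int i) \<omega>') (1 + k - int i) w)"
    for i
  have "md \<omega>W 1 X - md \<omega>' k (md \<omega>W 1 w) = fsum f"
    unfolding f_def X_def by (rule commutator_formula)
  also have "\<dots> = f 0 + f 1"
    by (subst fsum_eq_sum_lessThan[of 2]) (simp_all add: f_def gbinomial_1_left_eq_0 numeral_eq_Suc)
  also have "\<dots> = sc (- of_int (1 + k)) X + sc 2 X"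
    by (simp add: f_def md_derivative weight_omega' md_scale_left X_def)
  finally have "md \<omega>W 1 X = sc (of_int m) X + sc (- of_int (1 + k)) X + sc 2 X"
    using assms by (simp add: md_scale_right X_def algebra_simps)
  also have "\<dots> = sc (of_int (m + 1 - k)) X"
    unfolding scale_left_distrib[symmetric] by (rule arg_cong[where f = "\<lambda>a. sc a X"]) simp
  finally show ?thesis unfolding X_def .
qed

lemma wt_space_Vir: "wt_space sc Vir md \<omega>' n = Vir \<inter> wt_space sc UNIV md \<omega>W n"
  unfolding wt_space_def Lop_def using md_omegaW_eq_md_omega'_on_Vir[of _ 1] by auto

lemma Vir_graded: "u \<in> Vir \<Longrightarrow> finite_sum_of (\<lambda>n. Vir \<inter> wt_space sc UNIV md \<omega>W n) u"
proof (induction u rule: Vir.induct)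
  case vacuum
  show ?case
    by (rule finite_sum_of_component[where n=0])
      (simp add: wt_space_def Lop_def md_vacuum_nonneg Vir.vacuum)
next
  case (add u v)
  show ?case
    by (rule finite_sum_of_add[OF _ _ add.IH])
      (auto simp: wt_space_def Lop_def md_add_right scale_right_distrib Vir_zero intro: Vir.add)
next
  case (scale u a)
  have "additive (sc a)" by unfold_locales (rule scale_right_distrib)
  then show ?case
    by (rule finite_sum_of_image[OF scale.IH _ inj_on_id[unfolded id_def]])
      (auto simp: wt_space_def Lop_def md_scale_right mult.commute intro: Vir.scale)
next
  case (mode u k)
  have "additive (md \<omega>' k)" by unfold_locales (rule md_add_right)
  moreover have "inj (\<lambda>n. n + 1 - k)" by (simp add: inj_def)
  ultimately show ?case
    by (rule finite_sum_of_image[OF mode.IH])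
      (auto simp: wt_space_def Lop_def dest: md_omega'_shifts_weight[where k = k] intro: Vir.mode)
qed

lemma vertex_algebra_Vir: "is_vertex_algebra sc Vir md vac"
  unfolding is_vertex_algebra_def
  using vector_space_axioms subspace_Vir Vir.vacuum md_in_Vir md_add_right md_add_left md_scale_right
    md_scale_left md_truncation md_vacuum_left md_vacuum_creation md_vacuum_nonneg borcherds
  by simp

lemma wt_space_Vir_finite_basis:
  "\<exists>B. finite B \<and> B \<subseteq> wt_space sc Vir md \<omega>' n \<and> wt_space sc Vir md \<omega>' n \<subseteq> span B"
proof -
  obtain B where B: "finite B" "B \<subseteq> wt_space sc UNIV md \<omega>W n" "wt_space sc UNIV md \<omega>W n \<subseteq> span B"
    using wt_space_finite_basis by blast
  obtain B' where B': "B' \<subseteq> wt_space sc Vir md \<omega>' n" "independent B'"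
      "wt_space sc Vir md \<omega>' n \<subseteq> span B'" "card B' = dim (wt_space sc Vir md \<omega>' n)"
    by (rule basis_exists)
  have "B' \<subseteq> span B" using B'(1) B(3) unfolding wt_space_Vir by blast
  then have "finite B'" using independent_span_bound[OF B(1) B'(2)] by simp
  with B' show ?thesis by blast
qed

lemma wt_space_Vir_bounded_below: "\<exists>N. \<forall>n<N. wt_space sc Vir md \<omega>' n = {0}"
proof -
  obtain N where N: "\<forall>n<N. wt_space sc UNIV md \<omega>W n = {0}"
    using wt_space_bounded_below by blast
  have "wt_space sc Vir md \<omega>' n = {0}" if "n < N" for n
  proof -
    have "0 \<in> wt_space sc Vir md \<omega>' n" by (simp add: wt_space_def Lop_def Vir_zero)
    then show ?thesis using N that unfolding wt_space_Vir by auto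
  qed
  then show ?thesis by blast
qed

lemma VOA_Vir: "is_VOA sc Vir md vac \<omega>'"
  unfolding is_VOA_iff
proof (intro conjI ballI allI)
  show "is_vertex_algebra sc Vir md vac" by (rule vertex_algebra_Vir)
  show "\<omega>' \<in> Vir" by (rule omega'_in_Vir)
  show "\<exists>c. virasoro_relations sc Vir md \<omega>' c" using virasoro_relations_omega' ..
  show "md (Lop md \<omega>' (- 1) u) n v = sc (- of_int n) (md u (n - 1) v)" if "u \<in> Vir" for u v n
    using md_derivative_Vir[OF that] by (simp add: Lop_def)
  show "\<exists>S f. finite S \<and> (\<forall>n\<in>S. f n \<in> wt_space sc Vir md \<omega>' n) \<and> v = sum f S" if "v \<in> Vir" for v
    using Vir_graded[OF that] unfolding finite_sum_of_def wt_space_Vir .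
  show "\<exists>B. finite B \<and> B \<subseteq> wt_space sc Vir md \<omega>' n \<and> wt_space sc Vir md \<omega>' n \<subseteq> span B" for n
    by (rule wt_space_Vir_finite_basis)
  show "\<exists>N. \<forall>n<N. wt_space sc Vir md \<omega>' n = {0}" by (rule wt_space_Vir_bounded_below)
qed

lemma semi_conformal_omega': "semi_conformal sc md vac \<omega>W \<omega>'"
  unfolding semi_conformal_def
proof (intro exI conjI allI impI ballI)
  show "is_VOA sc Vir md vac \<omega>'" by (rule VOA_Vir)
  show "Lop md \<omega>W n u = Lop md \<omega>' n u" if "n \<ge> 0" "u \<in> Vir" for n u
    using md_omegaW_eq_md_omega'_on_Vir[OF that(2), of "nat (n + 1)"] that(1) by (simp add: Lop_def)
qed

end

lemma conformal_modes_semi_conformal: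
  assumes "is_VOA sc UNIV md vac \<omega>W"
    and "\<forall>n\<ge>-1. Lop md \<omega>' n \<omega>' = Lop md \<omega>W n \<omega>'"
    and "conformal_modes sc md vac \<omega>' c"
  shows "semi_conformal sc md vac \<omega>W \<omega>'"
proof -
  interpret conformal_candidate sc md vac \<omega>W \<omega>' c
    using assms by unfold_locales simp_all
  show ?thesis by (rule semi_conformal_omega')
qed

theorem proposition2p2:
  fixes sc :: "complex \<Rightarrow> 'v::ab_group_add \<Rightarrow> 'v"
    and md :: "'v \<Rightarrow> int \<Rightarrow> 'v \<Rightarrow> 'v"
    and vac \<omega>W \<omega>' :: 'v
  assumes W: "is_VOA sc UNIV md vac \<omega>W"
    and w2: "\<omega>' \<in> wt_space sc UNIV md \<omega>W 2"
  shows "semi_conformal sc md vac \<omega>W \<omega>' \<longleftrightarrow>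
     (Lop md \<omega>' 0 \<omega>' = Lop md \<omega>W 0 \<omega>' \<and> Lop md \<omega>W 0 \<omega>' = sc 2 \<omega>'
      \<and> Lop md \<omega>' 1 \<omega>' = Lop md \<omega>W 1 \<omega>' \<and> Lop md \<omega>W 1 \<omega>' = 0
      \<and> (\<exists>c'::complex. Lop md \<omega>' 2 \<omega>' = Lop md \<omega>W 2 \<omega>' \<and> Lop md \<omega>W 2 \<omega>' = sc (c' / 2) vac)
      \<and> Lop md \<omega>' (-1) \<omega>' = Lop md \<omega>W (-1) \<omega>'
      \<and> (\<forall>n\<ge>3. Lop md \<omega>' n \<omega>' = Lop md \<omega>W n \<omega>' \<and> Lop md \<omega>W n \<omega>' = 0))"
  unfolding agreeing_conformal_modes_iff[symmetric]
  using semi_conformal_conformal_modes[OF W] conformal_modes_semi_conformal[OF W] by blast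

end
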